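(* Let $\alpha\in(\tfrac12,1)$, $0<\eta_0\le\frac1{2\lambda_\Sigma}$, $\eta_t=\eta_0t^{-\alpha}$, and assume $\Gamma$ is positive definite. If $$T\ge4\Big(\frac2{(1-\gamma)\lambda_0\eta_0}\Big)^{\frac1{1-\alpha}}(1-\alpha)^{\frac\alpha{1-\alpha}}\,\Gamma\Big(\frac1{1-\alpha}\Big)\,\mathrm{cond}(\Gamma),$$ then $\lambda_{\min}(A\bar\Lambda_TA^\top)\ge\frac12\lambda_{\min}(\Gamma)=\frac1{2\|\Gamma^{-1}\|}$.
   Context: $\mathcal S$ is a finite state space, $\gamma\in[0,1)$, $P(\cdot\mid s)$ a Markov transition kernel on $\mathcal S$ with stationary distribution $\mu$, $r:\mathcal S\to[0,1]$ the expected reward, and $\phi:\mathcal S\to\mathbb R^d$ a feature map with $\|\phi(s)\|_2\le1$. $A=\mathbb E_{s\sim\mu,s'\sim P(\cdot\mid s)}[\phi(s)(\phi(s)-\gamma\phi(s'))^\top]$, $b=\mathbb E_{s\sim\mu}[\phi(s)r(s)]$, $\Sigma=\mathbb E_{s\sim\mu}[\phi(s)\phi(s)^\top]$, $\lambda_0=\lambda_{\min}(\Sigma)>0$, $\lambda_\Sigma=\lambda_{\max}(\Sigma)$, $\theta^\star=A^{-1}b$. With $s_t\sim\mu$, $s_t'\sim P(\cdot\mid s_t)$, $r_t\in[0,1]$, $\mathbb E[r_t\mid s_t]=r(s_t)$, $A_t=\phi(s_t)(\phi(s_t)-\gamma\phi(s_t'))^\top$, $b_t=r_t\phi(s_t)$: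 $\Gamma=\mathbb E[(A_t\theta^\star-b_t)(A_t\theta^\star-b_t)^\top]$. For $0\le t\le T$, $Q_t=\eta_t\sum_{j=t}^T\prod_{k=t+1}^j(I-\eta_kA)$ (empty product $=I$), $\bar\Lambda_T=\frac1T\sum_{t=1}^TQ_t\Gamma Q_t^\top$. In the displayed condition, $\Gamma(\cdot)$ applied to a number denotes the Euler Gamma function, and $\mathrm{cond}(\Gamma)$ is the condition number of the matrix $\Gamma$. *)

theory Defs
  imports "HOL-Probability.Probability"
begin

definition real_eigenvalues :: "real^'n^'n \<Rightarrow> real set" where
  "real_eigenvalues M = {c. \<exists>v. v \<noteq> 0 \<and> M *v v = c *s v}"

definition lambda_min :: "real^'n^'n \<Rightarrow> real" where
  "lambda_min M = Min (real_eigenvalues M)"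

definition lambda_max :: "real^'n^'n \<Rightarrow> real" where
  "lambda_max M = Max (real_eigenvalues M)"

definition pos_def :: "real^'n^'n \<Rightarrow> bool" where
  "pos_def M \<longleftrightarrow> (\<forall>x. x \<noteq> 0 \<longrightarrow> x \<bullet> (M *v x) > 0)"

definition mat_norm :: "real^'n^'m \<Rightarrow> real" where
  "mat_norm M = onorm (\<lambda>x. M *v x)"

definition cond_num :: "real^'n^'n \<Rightarrow> real" where
  "cond_num M = mat_norm M * mat_norm (matrix_inv M)"

definition outer :: "real^'n \<Rightarrow> real^'m \<Rightarrow> real^'m^'n" where
  "outer u v = (\<chi> i j. u $ i * v $ j)"

definition step_prod :: "(nat \<Rightarrow> real) \<Rightarrow> real^'n^'n \<Rightarrow> nat \<Rightarrow> nat \<Rightarrow> real^'n^'n" where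
  "step_prod eta A t j = foldr (\<lambda>k M. (mat 1 - eta k *\<^sub>R A) ** M) [Suc t..<Suc j] (mat 1)"

definition Qmat :: "(nat \<Rightarrow> real) \<Rightarrow> real^'n^'n \<Rightarrow> nat \<Rightarrow> nat \<Rightarrow> real^'n^'n" where
  "Qmat eta A T t = eta t *\<^sub>R (\<Sum>j\<in>{t..T}. step_prod eta A t j)"

definition Lambda_bar :: "(nat \<Rightarrow> real) \<Rightarrow> real^'n^'n \<Rightarrow> real^'n^'n \<Rightarrow> nat \<Rightarrow> real^'n^'n" where
  "Lambda_bar eta A G T =
     (1 / real T) *\<^sub>R (\<Sum>t\<in>{1..T}. Qmat eta A T t ** G ** transpose (Qmat eta A T t))"

end

theory Submission
  imports Defs
begin

text \<open>
  For a vector x put u_t = Q_t^T A^T x. Then x^T (A Lambda_T A^T) x = (1/T) sum_t u_t^T Gamma u_t, which is at least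
  lambda_min(Gamma)/T times sum_t |u_t|^2, and by Cauchy-Schwarz it suffices that sum_t <u_t, x> >= (3/4) T |x|^2.
  Summation by parts gives sum_t A Q_t = sum_j (I - Pi_j) with Pi_j the product of the I - eta_k A for k <= j.
  By stationarity, x^T A x >= (1 - gamma) x^T Sigma x and |A x|^2 <= lambda_max(Sigma) (2 x^T A x - (1 - gamma^2)
  x^T Sigma x), so as long as eta_k lambda_max(Sigma) <= 1/2 each factor I - eta_k A contracts by
  exp (-b_k) with b_k = (3/4) (1 - gamma) lambda_0 eta_k, and it remains to show
  sum_(j<=T) exp (-(b_1 + ... + b_j)) <= T/4;
  this follows by comparing the series with the integral defining Gamma(1/(1 - alpha)), already without the factor
  cond(Gamma) >= 1.
\<close>

lemma matrix_vector_mult_sum_left: "(\<Sum>s\<in>S. (M s::real^'n^'m)) *v y = (\<Sum>s\<in>S. M s *v y)"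
  by (induction S rule: infinite_finite_induct) (auto simp: matrix_vector_mult_add_rdistrib)

lemma transpose_sum: "transpose (\<Sum>s\<in>S. (M s::real^'n^'m)) = (\<Sum>s\<in>S. transpose (M s))"
  by (induction S rule: infinite_finite_induct) (auto simp: transpose_def vec_eq_iff)

lemma outer_matrix_vector: "outer u v *v y = (v \<bullet> y) *\<^sub>R (u::real^'n)"
  by (simp add: outer_def matrix_vector_mult_def vec_eq_iff inner_vec_def sum_distrib_left algebra_simps)

lemma transpose_outer: "transpose (outer u v) = outer v (u::real^'n)"
  by (simp add: transpose_def outer_def vec_eq_iff mult.commute)

lemma transpose_expectation_symmetric:
  fixes D :: "'a pmf" and f :: "'a \<Rightarrow> real^'n^'n"
  assumes "\<And>p. transpose (f p) = f p"
  shows "transpose (measure_pmf.expectation D f) = measure_pmf.expectation D f"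
proof -
  have "linear (transpose :: real^'n^'n \<Rightarrow> real^'n^'n)"
    by (rule linearI) (simp_all add: transpose_def vec_eq_iff)
  then have bl: "bounded_linear (transpose :: real^'n^'n \<Rightarrow> real^'n^'n)"
    by (simp add: linear_conv_bounded_linear)
  have "transpose (measure_pmf.expectation D f) = measure_pmf.expectation D (\<lambda>p. transpose (f p))"
    by (rule integral_bounded_linear'[OF bl bl, symmetric]) simp
  also have "(\<lambda>p. transpose (f p)) = f" using assms by (rule ext)
  finally show ?thesis .
qed

section \<open>Symmetric and positive definite matrices\<close>

lemma inner_matrix_vector_transpose: "x \<bullet> ((M::real^'n^'m) *v z) = (transpose M *v x) \<bullet> z"
  by (metis dot_lmul_matrix transpose_matrix_vector)

lemma quadratic_form_min_on_sphere:
  fixes M :: "real^'n^'n"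
  obtains v where "norm v = 1" "\<And>x. (v \<bullet> (M *v v)) * (norm x)^2 \<le> x \<bullet> (M *v x)"
proof -
  let ?f = "\<lambda>x::real^'n. x \<bullet> (M *v x)"
  have "continuous_on (sphere 0 1) ?f"
    by (intro continuous_intros linear_continuous_on matrix_vector_mul_bounded_linear)
  moreover have "sphere (0::real^'n) 1 \<noteq> {}" by simp
  ultimately obtain v where v: "v \<in> sphere 0 1" and vmin: "\<And>y. y \<in> sphere 0 1 \<Longrightarrow> ?f v \<le> ?f y"
    using continuous_attains_inf[OF compact_sphere] by blast
  have "?f v * (norm x)^2 \<le> ?f x" for x
  proof (cases "x = 0")
    case False
    define u where "u = (1 / norm x) *\<^sub>R x"
    have "u \<in> sphere 0 1" using False by (simp add: u_def)
    then have "?f v \<le> ?f u" by (rule vmin)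
    moreover have "?f x = (norm x)^2 * ?f u"
      using False by (simp add: u_def matrix_vector_mult_scaleR power2_eq_square)
    ultimately show ?thesis by (simp add: mult.commute mult_right_mono)
  qed simp
  with v that show thesis by simp
qed

lemma psd_quadratic_form_eq_0_imp:
  fixes B :: "real^'n^'n"
  assumes sym: "transpose B = B" and psd: "\<And>x. 0 \<le> x \<bullet> (B *v x)" and v: "v \<bullet> (B *v v) = 0"
  shows "B *v v = 0"
proof (rule ccontr)
  define w where "w = B *v v"
  define K where "K = w \<bullet> (B *v w)"
  assume "B *v v \<noteq> 0"
  then have ww: "0 < w \<bullet> w" by (simp add: w_def)
  have vBw: "v \<bullet> (B *v w) = w \<bullet> w"
    using inner_matrix_vector_transpose[of v B w] sym by (simp add: w_def)
  have expand: "(v + t *\<^sub>R w) \<bullet> (B *v (v + t *\<^sub>R w)) = 2 * t * (w \<bullet> w) + t^2 * K" for t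
    using v vBw by (simp add: matrix_vector_right_distrib matrix_vector_mult_scaleR inner_add_left
        inner_add_right K_def w_def inner_commute power2_eq_square algebra_simps)
  \<comment> \<open>Along the direction \<open>-w\<close> the form would become negative for a small step \<open>s\<close>.\<close>
  define s where "s = (w \<bullet> w) / (\<bar>K\<bar> + 1)"
  have s: "0 < s" using ww by (simp add: s_def)
  have "0 \<le> 2 * (- s) * (w \<bullet> w) + (- s)^2 * K"
    using psd[of "v + (- s) *\<^sub>R w"] by (simp only: expand)
  then have "2 * (w \<bullet> w) \<le> s * K" using s by (simp add: power2_eq_square algebra_simps)
  moreover have "s * K \<le> s * \<bar>K\<bar>" using s by (intro mult_left_mono) auto
  moreover have "s * \<bar>K\<bar> \<le> w \<bullet> w" using ww by (simp add: s_def field_simps)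
  ultimately show False using ww by linarith
qed

lemma symmetric_min_eigenpair:
  fixes M :: "real^'n^'n"
  assumes "transpose M = M"
  obtains v m where "norm v = 1" "M *v v = m *\<^sub>R v" "\<And>x. m * (norm x)^2 \<le> x \<bullet> (M *v x)"
proof -
  obtain v where v: "norm v = 1" and vmin: "\<And>x. (v \<bullet> (M *v v)) * (norm x)^2 \<le> x \<bullet> (M *v x)"
    using quadratic_form_min_on_sphere[of M] by blast
  define m where "m = v \<bullet> (M *v v)"
  define B where "B = M - m *\<^sub>R mat 1"
  have B: "B *v x = M *v x - m *\<^sub>R x" for x
    by (simp add: B_def matrix_vector_mult_diff_rdistrib flip: scaleR_matrix_vector_assoc)
  have "B *v v = 0"
  proof (rule psd_quadratic_form_eq_0_imp)
    show "transpose B = B"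
      using assms by (simp add: B_def transpose_def vec_eq_iff mat_def)
    show "0 \<le> x \<bullet> (B *v x)" for x
      using vmin[of x] by (simp add: B inner_diff_right m_def power2_norm_eq_inner)
    show "v \<bullet> (B *v v) = 0"
      using v by (simp add: B inner_diff_right m_def norm_eq_1)
  qed
  then show thesis using that v vmin B by (simp add: m_def)
qed

lemma real_eigenvaluesI: "M *v v = c *\<^sub>R v \<Longrightarrow> v \<noteq> 0 \<Longrightarrow> c \<in> real_eigenvalues M"
  unfolding real_eigenvalues_def by (auto simp: scalar_mult_eq_scaleR)

lemma real_eigenvaluesE:
  assumes "c \<in> real_eigenvalues M"
  obtains v where "v \<noteq> 0" "M *v v = c *\<^sub>R v"
  using assms unfolding real_eigenvalues_def mem_Collect_eq scalar_mult_eq_scaleR by (elim exE conjE)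

lemma finite_real_eigenvalues_symmetric:
  assumes sym: "transpose (M::real^'n^'n) = M"
  shows "finite (real_eigenvalues M)"
proof -
  define S where "S = real_eigenvalues M"
  define ev where "ev c = (SOME v. v \<noteq> 0 \<and> M *v v = c *\<^sub>R v)" for c
  have ev: "ev c \<noteq> 0 \<and> M *v ev c = c *\<^sub>R ev c" if "c \<in> S" for c
  proof -
    have "\<exists>v. v \<noteq> 0 \<and> M *v v = c *\<^sub>R v"
      using that unfolding S_def by (blast elim: real_eigenvaluesE)
    then show ?thesis unfolding ev_def by (rule someI_ex)
  qed
  have inj: "inj_on ev S"
  proof (rule inj_onI)
    fix c d assume c: "c \<in> S" and d: "d \<in> S" and "ev c = ev d"
    then have "c *\<^sub>R ev c = d *\<^sub>R ev c" using ev[OF c] ev[OF d] by metis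
    then show "c = d" using ev[OF c] by (simp add: scaleR_cancel_right)
  qed
  have "pairwise orthogonal (ev ` S)"
  proof (clarsimp simp: pairwise_def)
    fix c d assume c: "c \<in> S" and d: "d \<in> S" and "ev c \<noteq> ev d"
    then have cd: "c \<noteq> d" by auto
    have "c * (ev c \<bullet> ev d) = (M *v ev c) \<bullet> ev d" using ev[OF c] by simp
    also have "\<dots> = ev c \<bullet> (M *v ev d)" using inner_matrix_vector_transpose sym by metis
    also have "\<dots> = d * (ev c \<bullet> ev d)" using ev[OF d] by simp
    finally show "orthogonal (ev c) (ev d)" using cd by (simp add: orthogonal_def)
  qed
  moreover have "0 \<notin> ev ` S" using ev by auto
  ultimately have "finite (ev ` S)"
    using pairwise_orthogonal_independent finiteI_independent by blast
  then show ?thesis using inj finite_imageD S_def by blast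
qed

lemma symmetric_lambda_min:
  assumes sym: "transpose (M::real^'n^'n) = M"
  shows "\<exists>v. norm v = 1 \<and> M *v v = lambda_min M *\<^sub>R v"
    and "lambda_min M * (norm x)^2 \<le> x \<bullet> (M *v x)"
proof -
  obtain v m where v: "norm v = 1" "M *v v = m *\<^sub>R v" and m: "\<And>x. m * (norm x)^2 \<le> x \<bullet> (M *v x)"
    using symmetric_min_eigenpair[OF sym] by blast
  have "m \<in> real_eigenvalues M"
    using v by (intro real_eigenvaluesI) auto
  moreover have "m \<le> c" if c: "c \<in> real_eigenvalues M" for c
  proof -
    obtain u where u: "u \<noteq> 0" "M *v u = c *\<^sub>R u" using c by (rule real_eigenvaluesE)
    have "m * (norm u)^2 \<le> c * (norm u)^2" using m[of u] u(2) by (simp add: power2_norm_eq_inner)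
    then show ?thesis using u(1) by simp
  qed
  ultimately have "lambda_min M = m"
    unfolding lambda_min_def by (intro Min_eqI finite_real_eigenvalues_symmetric[OF sym])
  then show "\<exists>v. norm v = 1 \<and> M *v v = lambda_min M *\<^sub>R v" "lambda_min M * (norm x)^2 \<le> x \<bullet> (M *v x)"
    using v m by auto
qed

lemma lambda_min_ge_if_quadratic_form_ge:
  assumes sym: "transpose (M::real^'n^'n) = M" and ge: "\<And>x. c * (norm x)^2 \<le> x \<bullet> (M *v x)"
  shows "c \<le> lambda_min M"
proof -
  obtain v where v: "norm v = 1" "M *v v = lambda_min M *\<^sub>R v" using symmetric_lambda_min(1)[OF sym] by blast
  have "c \<le> v \<bullet> (M *v v)" using ge[of v] v(1) by simp
  also have "\<dots> = lambda_min M" using v by (simp add: norm_eq_1)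
  finally show ?thesis .
qed

lemma quadratic_form_le_lambda_max:
  assumes sym: "transpose (M::real^'n^'n) = M"
  shows "x \<bullet> (M *v x) \<le> lambda_max M * (norm x)^2"
proof -
  have neg: "(- M) *v y = - (M *v y)" for y
    by (simp add: matrix_vector_mult_def vec_eq_iff sum_negf)
  have "transpose (- M) = - M" using sym by (simp add: transpose_def vec_eq_iff)
  then obtain v m where v: "norm v = 1" "(- M) *v v = m *\<^sub>R v" and m: "\<And>x. m * (norm x)^2 \<le> x \<bullet> ((- M) *v x)"
    using symmetric_min_eigenpair[of "- M"] by blast
  have "M *v v = (- m) *\<^sub>R v" using v(2) neg by (metis minus_minus scaleR_minus_left)
  then have "- m \<in> real_eigenvalues M"
    using v(1) by (intro real_eigenvaluesI) auto
  then have "- m \<le> lambda_max M" unfolding lambda_max_def using finite_real_eigenvalues_symmetric[OF sym] by simp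
  moreover have "x \<bullet> (M *v x) \<le> (- m) * (norm x)^2" using m[of x] by (simp add: neg)
  ultimately show ?thesis by (smt (verit) mult_right_mono zero_le_power2)
qed

lemma matrix_inv_mult:
  assumes "invertible (A::real^'n^'n)"
  shows "A ** matrix_inv A = mat 1" "matrix_inv A ** A = mat 1"
  using assms unfolding matrix_inv_def invertible_def by (auto intro: someI2_ex)

lemma norm_matrix_vector_le_mat_norm: "norm (M *v x) \<le> mat_norm M * norm x"
  unfolding mat_norm_def by (rule onorm) (rule matrix_vector_mul_bounded_linear)

lemma lambda_min_mult_norm_le:
  assumes sym: "transpose (G::real^'n^'n) = G"
  shows "lambda_min G * norm x \<le> norm (G *v x)"
proof (cases "x = 0")
  case False
  have "lambda_min G * (norm x)^2 \<le> norm x * norm (G *v x)"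
    using symmetric_lambda_min(2)[OF sym, of x] norm_cauchy_schwarz[of x "G *v x"] by linarith
  then show ?thesis using False by (simp add: power2_eq_square mult.assoc[symmetric])
qed simp

lemma pos_def_lambda_min_pos:
  assumes sym: "transpose (G::real^'n^'n) = G" and pd: "pos_def G"
  shows "0 < lambda_min G"
proof -
  obtain v where v: "norm v = 1" "G *v v = lambda_min G *\<^sub>R v"
    using symmetric_lambda_min(1)[OF sym] by blast
  have "v \<noteq> 0" using v(1) by auto
  then have "0 < v \<bullet> (G *v v)" using pd by (simp add: pos_def_def)
  also have "\<dots> = lambda_min G" using v by (simp add: norm_eq_1)
  finally show ?thesis .
qed

lemma pos_def_invertible:
  assumes sym: "transpose (G::real^'n^'n) = G" and pd: "pos_def G"
  shows "invertible G"
proof -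
  have "inj ((*v) G)"
  proof (rule injI)
    fix x y assume "G *v x = G *v y"
    then have "lambda_min G * norm (x - y) \<le> 0"
      using lambda_min_mult_norm_le[OF sym, of "x - y"] by (simp add: matrix_vector_mult_diff_distrib)
    then show "x = y" using pos_def_lambda_min_pos[OF sym pd] by (simp add: mult_le_0_iff)
  qed
  then show ?thesis using matrix_left_invertible_injective invertible_left_inverse by blast
qed

lemma pos_def_mat_norm_matrix_inv:
  assumes sym: "transpose (G::real^'n^'n) = G" and pd: "pos_def G"
  shows "mat_norm (matrix_inv G) = 1 / lambda_min G"
proof -
  define m where "m = lambda_min G"
  have m: "0 < m" using pos_def_lambda_min_pos[OF sym pd] by (simp add: m_def)
  have low: "m * norm x \<le> norm (G *v x)" for x using lambda_min_mult_norm_le[OF sym] by (simp add: m_def)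
  note inv = matrix_inv_mult[OF pos_def_invertible[OF sym pd]]
  define H where "H = matrix_inv G"
  have HG: "H *v (G *v x) = x" and GH: "G *v (H *v x) = x" for x
    using inv by (simp_all add: H_def matrix_vector_mul_assoc)
  have "mat_norm H \<le> 1 / m" unfolding mat_norm_def
  proof (rule onorm_le)
    fix y
    have "m * norm (H *v y) \<le> norm y" using low[of "H *v y"] GH by simp
    then show "norm (H *v y) \<le> 1 / m * norm y" using m by (simp add: field_simps mult.commute)
  qed
  moreover have "1 / m \<le> mat_norm H"
  proof -
    obtain v where v: "norm v = 1" "G *v v = m *\<^sub>R v" using symmetric_lambda_min(1)[OF sym] m_def by blast
    have "v = m *\<^sub>R (H *v v)" using HG[of v] v by (simp add: matrix_vector_mult_scaleR)
    then have "1 = m * norm (H *v v)" using v(1) m by (metis norm_scaleR abs_of_pos)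
    moreover have "norm (H *v v) \<le> mat_norm H" using norm_matrix_vector_le_mat_norm[of H v] v by simp
    ultimately show ?thesis using m by (simp add: field_simps) (smt (verit) mult_left_mono)
  qed
  ultimately show ?thesis by (simp add: H_def m_def)
qed

lemma cond_num_ge_1:
  assumes "invertible (G::real^'n^'n)"
  shows "1 \<le> cond_num G"
proof -
  obtain x :: "real^'n" where x: "norm x = 1" using vector_choose_size zero_le_one by blast
  have "1 = norm (matrix_inv G *v (G *v x))"
    using x matrix_inv_mult[OF assms] by (simp add: matrix_vector_mul_assoc)
  also have "\<dots> \<le> mat_norm (matrix_inv G) * norm (G *v x)" by (rule norm_matrix_vector_le_mat_norm)
  also have "\<dots> \<le> mat_norm (matrix_inv G) * mat_norm G"
    using norm_matrix_vector_le_mat_norm[of G x] x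
    by (intro mult_left_mono) (auto simp: mat_norm_def intro: onorm_pos_le matrix_vector_mul_bounded_linear)
  finally show ?thesis by (simp add: cond_num_def mult.commute)
qed

section \<open>Products of step matrices and the matrices \<open>Q\<^sub>t\<close>\<close>

lemma step_prod_refl: "step_prod \<eta> A j j = mat 1"
  by (simp add: step_prod_def)

lemma step_prod_Suc:
  "Suc t \<le> j \<Longrightarrow> step_prod \<eta> A t j = (mat 1 - \<eta> (Suc t) *\<^sub>R A) ** step_prod \<eta> A (Suc t) j"
  unfolding step_prod_def by (subst upt_conv_Cons) auto

lemma norm_step_prod_le_exp:
  fixes A :: "real^'n^'n"
  assumes step: "\<And>k y. 1 \<le> k \<Longrightarrow> norm ((mat 1 - \<eta> k *\<^sub>R A) *v y) \<le> exp (- (c * \<eta> k)) * norm y"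
  shows "norm (step_prod \<eta> A t j *v x) \<le> exp (- (\<Sum>k\<in>{Suc t..j}. c * \<eta> k)) * norm x"
proof -
  have foldr_le: "norm (foldr (\<lambda>k M. (mat 1 - \<eta> k *\<^sub>R A) ** M) ks (mat 1) *v x)
      \<le> exp (- (\<Sum>k\<leftarrow>ks. c * \<eta> k)) * norm x"
    if "\<forall>k\<in>set ks. 1 \<le> k" for ks
    using that
  proof (induction ks)
    case (Cons k ks)
    let ?F = "foldr (\<lambda>k M. (mat 1 - \<eta> k *\<^sub>R A) ** M) ks (mat 1)"
    have "norm ((mat 1 - \<eta> k *\<^sub>R A) *v (?F *v x)) \<le> exp (- (c * \<eta> k)) * norm (?F *v x)"
      using Cons.prems by (intro step) simp
    also have "\<dots> \<le> exp (- (c * \<eta> k)) * (exp (- (\<Sum>k\<leftarrow>ks. c * \<eta> k)) * norm x)"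
      using Cons by (intro mult_left_mono) auto
    finally show ?case by (simp add: matrix_vector_mul_assoc exp_add[symmetric] exp_diff algebra_simps)
  qed simp
  have "norm (step_prod \<eta> A t j *v x) \<le> exp (- (\<Sum>k\<leftarrow>[Suc t..<Suc j]. c * \<eta> k)) * norm x"
    unfolding step_prod_def by (rule foldr_le) auto
  moreover have "(\<Sum>k\<leftarrow>[Suc t..<Suc j]. c * \<eta> k) = (\<Sum>k\<in>{Suc t..j}. c * \<eta> k)"
    by (simp only: sum_set_upt_conv_sum_list_nat[symmetric] set_upt atLeastLessThanSuc_atLeastAtMost)
  ultimately show ?thesis by simp
qed

lemma sum_triangle_swap:
  fixes T :: nat
  shows "(\<Sum>t\<in>{1..T}. \<Sum>j\<in>{t..T}. g t j) = (\<Sum>j\<in>{1..T}. \<Sum>t\<in>{1..j}. (g t j :: 'a::comm_monoid_add))"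
proof (induction T)
  case (Suc T)
  have "(\<Sum>t\<in>{1..Suc T}. \<Sum>j\<in>{t..Suc T}. g t j) = (\<Sum>t\<in>{1..Suc T}. (\<Sum>j\<in>{t..T}. g t j) + g t (Suc T))"
    by (intro sum.cong refl) (auto simp: atLeastAtMostSuc_conv add.commute)
  then show ?case using Suc by (simp add: sum.distrib)
qed simp

text \<open>Summation by parts: \<open>A Q\<^sub>t\<close> is a sum of differences of consecutive products, so the sum over \<open>t\<close>
  telescopes.\<close>

lemma sum_A_Qmat:
  "(\<Sum>t\<in>{1..T}. A *v (Qmat \<eta> A T t *v x)) = (\<Sum>j\<in>{1..T}. x - step_prod \<eta> A 0 j *v (x::real^'n))"
proof -
  have diff: "\<eta> t *\<^sub>R (A *v (step_prod \<eta> A t j *v x)) = step_prod \<eta> A t j *v x - step_prod \<eta> A (t - 1) j *v x"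
    if "1 \<le> t" "t \<le> j" for t j
    using that step_prod_Suc[of "t - 1" j \<eta> A]
    by (simp add: matrix_vector_mult_diff_rdistrib flip: matrix_vector_mul_assoc scaleR_matrix_vector_assoc)
  have "(\<Sum>t\<in>{1..T}. A *v (Qmat \<eta> A T t *v x))
      = (\<Sum>t\<in>{1..T}. \<Sum>j\<in>{t..T}. \<eta> t *\<^sub>R (A *v (step_prod \<eta> A t j *v x)))"
    by (simp add: Qmat_def matrix_vector_mult_sum_left vec.sum scaleR_sum_right matrix_vector_mult_scaleR
        flip: scaleR_matrix_vector_assoc)
  also have "\<dots> = (\<Sum>j\<in>{1..T}. \<Sum>t\<in>{1..j}. \<eta> t *\<^sub>R (A *v (step_prod \<eta> A t j *v x)))"
    by (rule sum_triangle_swap)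
  also have "\<dots> = (\<Sum>j\<in>{1..T}. \<Sum>t\<in>{Suc 0..j}. step_prod \<eta> A t j *v x - step_prod \<eta> A (t - 1) j *v x)"
    by (intro sum.cong refl diff) auto
  also have "\<dots> = (\<Sum>j\<in>{1..T}. x - step_prod \<eta> A 0 j *v x)"
    by (intro sum.cong refl, subst sum_telescope'') (auto simp: step_prod_refl)
  finally show ?thesis .
qed

lemma sum_quadratic_form_A_Qmat_ge:
  assumes "\<And>j. norm (step_prod \<eta> A 0 j *v x) \<le> e j * norm x"
  shows "(real T - (\<Sum>j\<in>{1..T}. e j)) * (norm x)^2 \<le> (\<Sum>t\<in>{1..T}. x \<bullet> (A *v (Qmat \<eta> A T t *v (x::real^'n))))"
proof -
  have "(real T - (\<Sum>j\<in>{1..T}. e j)) * (norm x)^2 = (\<Sum>j\<in>{1..T}. (norm x)^2 - norm x * (e j * norm x))"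
    by (simp add: sum_subtractf sum_distrib_left sum_distrib_right power2_eq_square algebra_simps)
  also have "\<dots> \<le> (\<Sum>j\<in>{1..T}. x \<bullet> (x - step_prod \<eta> A 0 j *v x))"
  proof (intro sum_mono)
    fix j
    have "x \<bullet> (step_prod \<eta> A 0 j *v x) \<le> norm x * (e j * norm x)"
      using norm_cauchy_schwarz[of x] assms[of j] by (smt (verit) mult_left_mono norm_ge_zero)
    then show "(norm x)^2 - norm x * (e j * norm x) \<le> x \<bullet> (x - step_prod \<eta> A 0 j *v x)"
      by (simp add: inner_diff_right power2_norm_eq_inner)
  qed
  also have "\<dots> = (\<Sum>t\<in>{1..T}. x \<bullet> (A *v (Qmat \<eta> A T t *v x)))"
    by (simp only: sum_A_Qmat flip: inner_sum_right)
  finally show ?thesis .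
qed

section \<open>The quadratic form of \<open>A \<Lambda>\<^sub>T A\<^sup>T\<close>\<close>

lemma quadratic_form_Lambda_bar:
  fixes A G :: "real^'n^'n"
  shows "x \<bullet> ((A ** Lambda_bar \<eta> A G T ** transpose A) *v x)
    = (1 / real T) * (\<Sum>t\<in>{1..T}. (transpose (Qmat \<eta> A T t) *v (transpose A *v x))
        \<bullet> (G *v (transpose (Qmat \<eta> A T t) *v (transpose A *v x))))"
  by (simp add: Lambda_bar_def matrix_vector_mult_sum_left inner_sum_right inner_matrix_vector_transpose
      flip: matrix_vector_mul_assoc scaleR_matrix_vector_assoc)

text \<open>A Cauchy--Schwarz estimate, in the form of Young's inequality \<open>2 W a - W\<^sup>2 \<le> a\<^sup>2\<close> for \<open>W = c \<parallel>x\<parallel>\<^sup>2\<close>.\<close>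

lemma sum_norm_sq_ge_if_sum_inner_ge:
  fixes u :: "'i \<Rightarrow> 'a::real_inner"
  assumes c: "0 \<le> c" and ge: "c * real (card I) * (norm x)^2 \<le> (\<Sum>t\<in>I. u t \<bullet> x)"
  shows "c^2 * real (card I) * (norm x)^2 \<le> (\<Sum>t\<in>I. (norm (u t))^2)"
proof (cases "x = 0")
  case False
  define W where "W = c * (norm x)^2"
  have W: "0 \<le> W" using c by (simp add: W_def)
  have "2 * W * (u t \<bullet> x) - W^2 \<le> (norm (u t))^2 * (norm x)^2" for t
  proof -
    have "(u t \<bullet> x)^2 \<le> (norm (u t) * norm x)^2"
      using Cauchy_Schwarz_ineq2[of "u t" x] by (metis abs_ge_zero power2_abs power_mono)
    moreover have "2 * W * (u t \<bullet> x) - W^2 \<le> (u t \<bullet> x)^2"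
      using zero_le_power2[of "u t \<bullet> x - W"] by (simp add: power2_eq_square algebra_simps)
    ultimately show ?thesis by (simp add: power_mult_distrib)
  qed
  then have "(\<Sum>t\<in>I. 2 * W * (u t \<bullet> x) - W^2) \<le> (\<Sum>t\<in>I. (norm (u t))^2) * (norm x)^2"
    by (simp add: sum_distrib_right sum_mono)
  moreover have "2 * W * (real (card I) * W) \<le> 2 * W * (\<Sum>t\<in>I. u t \<bullet> x)"
    using ge W by (intro mult_left_mono) (auto simp: W_def algebra_simps)
  ultimately have "real (card I) * W^2 \<le> (\<Sum>t\<in>I. (norm (u t))^2) * (norm x)^2"
    by (simp add: sum_subtractf sum_distrib_left power2_eq_square algebra_simps)
  then have "(c^2 * real (card I) * (norm x)^2) * (norm x)^2 \<le> (\<Sum>t\<in>I. (norm (u t))^2) * (norm x)^2"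
    by (simp add: W_def power2_eq_square algebra_simps)
  then show ?thesis using False by simp
qed (simp add: sum_nonneg)

lemma lambda_min_Lambda_bar_ge:
  fixes A G :: "real^'n^'n"
  assumes Gsym: "transpose G = G" and g: "0 \<le> lambda_min G" and T: "0 < T" and c: "0 \<le> c"
    and sum_ge: "\<And>x. c * real T * (norm x)^2 \<le> (\<Sum>t\<in>{1..T}. x \<bullet> (A *v (Qmat \<eta> A T t *v x)))"
  shows "c^2 * lambda_min G \<le> lambda_min (A ** Lambda_bar \<eta> A G T ** transpose A)"
proof (rule lambda_min_ge_if_quadratic_form_ge)
  show "transpose (A ** Lambda_bar \<eta> A G T ** transpose A) = A ** Lambda_bar \<eta> A G T ** transpose A"
    by (simp add: Lambda_bar_def transpose_scalar transpose_sum matrix_transpose_mul Gsym matrix_mul_assoc)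
  fix x
  define u where "u t = transpose (Qmat \<eta> A T t) *v (transpose A *v x)" for t
  have "u t \<bullet> x = x \<bullet> (A *v (Qmat \<eta> A T t *v x))" for t
    by (simp add: u_def inner_matrix_vector_transpose inner_commute)
  then have "c^2 * real T * (norm x)^2 \<le> (\<Sum>t\<in>{1..T}. (norm (u t))^2)"
    using sum_norm_sq_ge_if_sum_inner_ge[OF c, of "{1..T}" x u] sum_ge[of x] by simp
  then have "lambda_min G * (c^2 * real T * (norm x)^2) \<le> lambda_min G * (\<Sum>t\<in>{1..T}. (norm (u t))^2)"
    using g by (rule mult_left_mono)
  also have "\<dots> \<le> (\<Sum>t\<in>{1..T}. u t \<bullet> (G *v u t))"
    unfolding sum_distrib_left by (intro sum_mono symmetric_lambda_min(2)[OF Gsym])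
  finally show "c^2 * lambda_min G * (norm x)^2 \<le> x \<bullet> ((A ** Lambda_bar \<eta> A G T ** transpose A) *v x)"
    using T by (simp add: quadratic_form_Lambda_bar u_def field_simps)
qed

section \<open>Step-size series and the Gamma function\<close>

lemma powr_add_one_diff_le:
  fixes q k :: real
  assumes q: "0 < q" "q < 1" and k: "0 < k"
  shows "(k + 1) powr q - k powr q \<le> q * k powr (q - 1)"
proof -
  have der: "((\<lambda>x. x powr q) has_real_derivative q * x powr (q - 1)) (at x)" if "0 < x" for x
    using has_real_derivative_powr[OF that] .
  have "continuous_on {k..k+1} (\<lambda>x. x powr q)"
    using k by (intro continuous_at_imp_continuous_on ballI DERIV_isCont[OF der]) auto
  then obtain l z where z: "k < z" "z < k + 1" "((\<lambda>x. x powr q) has_real_derivative l) (at z)"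
      and eq: "(k + 1) powr q - k powr q = (k + 1 - k) * l"
    using MVT[of k "k + 1" "\<lambda>x. x powr q"] der k by (smt (verit) real_differentiable_def)
  have "l = q * z powr (q - 1)" using DERIV_unique[OF z(3) der] z k by simp
  moreover have "z powr (q - 1) \<le> k powr (q - 1)" using z k q by (intro powr_mono2') auto
  ultimately show ?thesis using eq q by simp
qed

lemma sum_powr_neg_ge:
  fixes \<alpha> :: real
  assumes "0 < \<alpha>" "\<alpha> < 1"
  shows "((real j + 1) powr (1 - \<alpha>) - 1) / (1 - \<alpha>) \<le> (\<Sum>k\<in>{1..j}. real k powr (- \<alpha>))"
proof (induction j)
  case (Suc j)
  have "(real j + 2) powr (1 - \<alpha>) - (real j + 1) powr (1 - \<alpha>) \<le> (1 - \<alpha>) * (real j + 1) powr (- \<alpha>)"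
    using powr_add_one_diff_le[of "1 - \<alpha>" "real j + 1"] assms by (simp add: add.assoc)
  then have "((real j + 2) powr (1 - \<alpha>) - (real j + 1) powr (1 - \<alpha>)) / (1 - \<alpha>) \<le> (real j + 1) powr (- \<alpha>)"
    using assms by (simp add: pos_divide_le_eq mult.commute)
  moreover have "((real j + 2) powr (1 - \<alpha>) - 1) / (1 - \<alpha>) = ((real j + 1) powr (1 - \<alpha>) - 1) / (1 - \<alpha>)
      + ((real j + 2) powr (1 - \<alpha>) - (real j + 1) powr (1 - \<alpha>)) / (1 - \<alpha>)"
    by (simp add: diff_divide_distrib)
  ultimately have "((real j + 2) powr (1 - \<alpha>) - 1) / (1 - \<alpha>)
      \<le> ((real j + 1) powr (1 - \<alpha>) - 1) / (1 - \<alpha>) + (real j + 1) powr (- \<alpha>)"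
    by linarith
  then show ?case using Suc by (simp add: add.commute add.left_commute)
qed simp

definition Gamma_integrand :: "real \<Rightarrow> real \<Rightarrow> real" where
  "Gamma_integrand p t = t powr (p - 1) / exp t"

lemma Gamma_integrand_integrable: "0 < u1 \<Longrightarrow> Gamma_integrand p integrable_on {u1..u2}"
  unfolding Gamma_integrand_def by (intro integrable_continuous_real continuous_intros) auto

lemma integral_Gamma_integrand_le_Gamma:
  assumes p: "0 < p" and u: "0 < u1"
  shows "integral {u1..u2} (Gamma_integrand p) \<le> Gamma p"
proof -
  have G: "(Gamma_integrand p has_integral Gamma p) {0..}"
    unfolding Gamma_integrand_def using Gamma_integral_real[OF p] .
  have "integral {u1..u2} (Gamma_integrand p) \<le> integral {0..} (Gamma_integrand p)"
    using u G Gamma_integrand_integrable[OF u]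
    by (intro integral_subset_le) (auto simp: Gamma_integrand_def has_integral_integrable)
  then show ?thesis using G by (simp add: integral_unique)
qed

lemma exp_mult_powr_diff_le_integral:
  fixes p u1 u2 :: real
  assumes p: "0 < p" and u: "0 < u1" "u1 \<le> u2"
  shows "exp (- u2) * ((u2 powr p - u1 powr p) / p) \<le> integral {u1..u2} (Gamma_integrand p)"
proof -
  have "((\<lambda>t. t powr (p - 1)) has_integral (u2 powr p / p - u1 powr p / p)) {u1..u2}"
  proof (rule fundamental_theorem_of_calculus[OF u(2)])
    fix x assume "x \<in> {u1..u2}"
    then have "((\<lambda>t. t powr p / p) has_real_derivative (p * x powr (p - 1)) / p) (at x)"
      using u by (intro DERIV_cdivide has_real_derivative_powr) auto
    then show "((\<lambda>t. t powr p / p) has_vector_derivative x powr (p - 1)) (at x within {u1..u2})"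
      using p by (simp add: has_real_derivative_iff_has_vector_derivative has_vector_derivative_at_within)
  qed
  from has_integral_mult_right[OF this, of "exp (- u2)"]
  have "((\<lambda>t. exp (- u2) * t powr (p - 1)) has_integral exp (- u2) * ((u2 powr p - u1 powr p) / p)) {u1..u2}"
    by (simp add: diff_divide_distrib)
  moreover have "(Gamma_integrand p has_integral integral {u1..u2} (Gamma_integrand p)) {u1..u2}"
    using Gamma_integrand_integrable[OF u(1)] by (rule integrable_integral)
  moreover have "exp (- u2) * t powr (p - 1) \<le> Gamma_integrand p t" if "t \<in> {u1..u2}" for t
  proof -
    have "exp (- u2) * t powr (p - 1) \<le> exp (- t) * t powr (p - 1)" using that by (intro mult_right_mono) auto
    then show ?thesis by (simp add: Gamma_integrand_def exp_minus field_simps)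
  qed
  ultimately show ?thesis by (rule has_integral_le)
qed

text \<open>Between consecutive nodes \<open>u\<^sub>j = a j\<^sup>1\<^sup>/\<^sup>p\<close> the measure \<open>t\<^sup>p\<^sup>-\<^sup>1 dt\<close> has mass \<open>a\<^sup>p / p\<close>
  and \<open>exp (- t) \<ge> exp (- u\<^sub>j\<^sub>+\<^sub>1)\<close>, so each term of the series is dominated by a piece of the Gamma integral.\<close>

lemma sum_exp_neg_powr_le_Gamma:
  fixes a p :: real
  assumes a: "0 < a" and p: "0 < p"
  shows "(\<Sum>j\<in>{1..n}. exp (- (a * real (Suc j) powr (1 / p)))) \<le> p / a powr p * Gamma p"
proof -
  define u where "u j = a * real j powr (1 / p)" for j :: nat
  have upow: "u j powr p = a powr p * real j" for j
    unfolding u_def using a p by (simp add: powr_mult powr_powr)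
  have umono: "u i \<le> u j" if "i \<le> j" for i j
    unfolding u_def using a p that by (intro mult_left_mono powr_mono2) auto
  have u1: "0 < u 1" unfolding u_def using a by simp
  have "(\<Sum>j\<in>{1..n}. exp (- u (Suc j))) \<le> p / a powr p * integral {u 1..u (Suc n)} (Gamma_integrand p)" for n
  proof (induction n)
    case (Suc n)
    have "exp (- u (Suc (Suc n))) * (a powr p / p)
        \<le> integral {u (Suc n)..u (Suc (Suc n))} (Gamma_integrand p)"
      using exp_mult_powr_diff_le_integral[OF p, of "u (Suc n)" "u (Suc (Suc n))"] u1 umono[of 1 "Suc n"]
        umono[of "Suc n" "Suc (Suc n)"] by (simp add: upow algebra_simps)
    then have step: "exp (- u (Suc (Suc n)))
        \<le> p / a powr p * integral {u (Suc n)..u (Suc (Suc n))} (Gamma_integrand p)"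
      using a p by (simp add: field_simps)
    have "(\<Sum>j\<in>{1..Suc n}. exp (- u (Suc j))) = (\<Sum>j\<in>{1..n}. exp (- u (Suc j))) + exp (- u (Suc (Suc n)))"
      by simp
    also have "\<dots> \<le> p / a powr p * integral {u 1..u (Suc n)} (Gamma_integrand p)
        + p / a powr p * integral {u (Suc n)..u (Suc (Suc n))} (Gamma_integrand p)"
      using Suc step by (rule add_mono)
    also have "\<dots> = p / a powr p * integral {u 1..u (Suc (Suc n))} (Gamma_integrand p)"
    proof -
      have "integral {u 1..u (Suc n)} (Gamma_integrand p) + integral {u (Suc n)..u (Suc (Suc n))} (Gamma_integrand p)
          = integral {u 1..u (Suc (Suc n))} (Gamma_integrand p)"
        using umono u1 by (intro Henstock_Kurzweil_Integration.integral_combine Gamma_integrand_integrable) auto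
      then show ?thesis by (metis distrib_left)
    qed
    finally show ?case .
  qed simp
  also have "p / a powr p * integral {u 1..u (Suc n)} (Gamma_integrand p) \<le> p / a powr p * Gamma p"
    using integral_Gamma_integrand_le_Gamma[OF p u1] a p by (intro mult_left_mono) auto
  finally show ?thesis by (simp add: u_def)
qed

lemma sum_exp_neg_partial_sums_le_Gamma:
  fixes \<alpha> b :: real
  assumes \<alpha>: "0 < \<alpha>" "\<alpha> < 1" and b: "0 < b"
  defines "p \<equiv> 1 / (1 - \<alpha>)"
  shows "(\<Sum>j\<in>{1..T}. exp (- (b * (\<Sum>k\<in>{1..j}. real k powr (- \<alpha>)))))
    \<le> exp (b * p) * (p / (b * p) powr p * Gamma p)"
proof -
  have p: "0 < p" and inv_p: "1 / p = 1 - \<alpha>" using \<alpha> by (simp_all add: p_def)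
  have "exp (- (b * (\<Sum>k\<in>{1..j}. real k powr (- \<alpha>)))) \<le> exp (b * p) * exp (- (b * p * real (Suc j) powr (1 / p)))"
    for j
  proof -
    have "b * (((real j + 1) powr (1 - \<alpha>) - 1) / (1 - \<alpha>)) \<le> b * (\<Sum>k\<in>{1..j}. real k powr (- \<alpha>))"
      using sum_powr_neg_ge[OF \<alpha>] b by (intro mult_left_mono) auto
    moreover have "b * (((real j + 1) powr (1 - \<alpha>) - 1) / (1 - \<alpha>)) = b * p * real (Suc j) powr (1 / p) - b * p"
      using \<alpha> by (simp add: inv_p p_def add.commute diff_divide_distrib right_diff_distrib)
    ultimately show ?thesis by (simp flip: exp_add)
  qed
  then have "(\<Sum>j\<in>{1..T}. exp (- (b * (\<Sum>k\<in>{1..j}. real k powr (- \<alpha>)))))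
      \<le> exp (b * p) * (\<Sum>j\<in>{1..T}. exp (- (b * p * real (Suc j) powr (1 / p))))"
    by (simp add: sum_distrib_left sum_mono)
  also have "\<dots> \<le> exp (b * p) * (p / (b * p) powr p * Gamma p)"
    using sum_exp_neg_powr_le_Gamma[of "b * p" p] b p by (intro mult_left_mono) auto
  finally show ?thesis .
qed

lemma exp_three_eighths_le: "exp (3/8::real) \<le> 3/2"
proof -
  have "1 + (- 3/32::real) \<le> exp (- 3/32)" by (rule exp_ge_add_one_self)
  then have "exp (3/32::real) \<le> 32/29" by (simp add: exp_minus field_simps)
  then have "exp (3/32::real) ^ 4 \<le> (32/29) ^ 4" by (intro power_mono) auto
  moreover have "exp (3/8::real) = exp (3/32) ^ 4" using exp_of_nat_mult[of 4 "3/32::real"] by simp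
  ultimately show ?thesis by (simp add: power_divide)
qed

lemma sum_exp_neg_partial_sums_le_quarter:
  fixes \<alpha> K :: real and T :: nat
  assumes \<alpha>: "0 < \<alpha>" "\<alpha> < 1" and K: "0 < K" "K \<le> 1/2"
    and T: "4 * (2 / K) powr (1 / (1 - \<alpha>)) * (1 - \<alpha>) powr (\<alpha> / (1 - \<alpha>)) * Gamma (1 / (1 - \<alpha>)) \<le> real T"
  shows "(\<Sum>j\<in>{1..T}. exp (- (3/4 * K * (\<Sum>k\<in>{1..j}. real k powr (- \<alpha>))))) \<le> real T / 4"
proof -
  define p where "p = 1 / (1 - \<alpha>)"
  define b where "b = 3/4 * K"
  have p: "0 < p" and b: "0 < b" "b \<le> 3/8" using \<alpha> K by (simp_all add: p_def b_def)
  have "exp (b * p) \<le> (3/2) powr p"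
  proof -
    have "exp b \<le> 3/2" using b exp_three_eighths_le by (smt (verit) exp_le_cancel_iff)
    then have "exp b powr p \<le> (3/2) powr p" using p by (intro powr_mono2) auto
    then show ?thesis by (simp add: exp_powr_real)
  qed
  moreover have "p / (b * p) powr p = 1 / (b powr p * p powr (p - 1))"
    using b p by (simp add: powr_mult powr_diff field_simps)
  ultimately have "exp (b * p) * (p / (b * p) powr p * Gamma p) \<le> (3/2) powr p / (b powr p * p powr (p - 1)) * Gamma p"
    using b p by (simp add: mult_right_mono divide_right_mono)
  also have "\<dots> = (2 / K) powr p * (1 - \<alpha>) powr (\<alpha> / (1 - \<alpha>)) * Gamma p"
  proof -
    have "\<alpha> / (1 - \<alpha>) = p - 1" and "1 - \<alpha> = 1 / p" using \<alpha> by (simp_all add: p_def field_simps)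
    then have "(1 - \<alpha>) powr (\<alpha> / (1 - \<alpha>)) = 1 / p powr (p - 1)" using p by (simp add: powr_divide)
    moreover have "(3/2) powr p / b powr p = (2 / K) powr p" using b by (simp add: b_def powr_divide[symmetric])
    moreover have "(3/2) powr p / (b powr p * p powr (p - 1)) * Gamma p
        = ((3/2) powr p / b powr p) * (1 / p powr (p - 1)) * Gamma p" by simp
    ultimately show ?thesis by simp
  qed
  also have "\<dots> \<le> real T / 4" using T by (simp add: p_def)
  finally have "exp (b * p) * (p / (b * p) powr p * Gamma p) \<le> real T / 4" .
  moreover have "(\<Sum>j\<in>{1..T}. exp (- (b * (\<Sum>k\<in>{1..j}. real k powr (- \<alpha>)))))
      \<le> exp (b * p) * (p / (b * p) powr p * Gamma p)"
    unfolding p_def by (rule sum_exp_neg_partial_sums_le_Gamma[OF \<alpha> b(1)])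
  ultimately show ?thesis unfolding b_def by linarith
qed

section \<open>The mean TD operator\<close>

lemma norm_le_exp_if_norm_sq_le:
  fixes y z :: "'a::real_normed_vector"
  assumes u: "0 \<le> u" and le: "(norm z)^2 \<le> (1 - 2 * u) * (norm y)^2"
  shows "norm z \<le> exp (- u) * norm y"
proof -
  have "1 - 2 * u \<le> (exp (- u))^2"
  proof (cases "u \<le> 1")
    case True
    have "1 - u \<le> exp (- u)" using exp_ge_add_one_self[of "- u"] by simp
    then have "(1 - u)^2 \<le> (exp (- u))^2" using True by (intro power_mono) auto
    moreover have "1 - 2 * u \<le> (1 - u)^2" by (simp add: power2_eq_square algebra_simps)
    ultimately show ?thesis by linarith
  next
    case False
    moreover have "0 \<le> (exp (- u))^2" by simp
    ultimately show ?thesis by linarith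
  qed
  then have "(norm z)^2 \<le> (exp (- u) * norm y)^2"
    using le mult_right_mono[of "1 - 2 * u" "(exp (- u))^2" "(norm y)^2"] by (simp add: power_mult_distrib)
  then show ?thesis by (rule power2_le_imp_le) simp
qed

locale td_chain =
  fixes \<gamma> :: real and P :: "'s::finite \<Rightarrow> 's \<Rightarrow> real" and \<mu> :: "'s \<Rightarrow> real"
    and \<phi> :: "'s \<Rightarrow> real^'d::finite"
  assumes gamma: "0 \<le> \<gamma>" "\<gamma> < 1"
    and P_nonneg: "\<And>s s'. 0 \<le> P s s'"
    and P_sum: "\<And>s. (\<Sum>s'\<in>UNIV. P s s') = 1"
    and mu_nonneg: "\<And>s. 0 \<le> \<mu> s"
    and mu_stat: "\<And>s'. (\<Sum>s\<in>UNIV. \<mu> s * P s s') = \<mu> s'"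
begin

definition Sig :: "real^'d^'d" where
  "Sig = (\<Sum>s\<in>UNIV. \<mu> s *\<^sub>R outer (\<phi> s) (\<phi> s))"

definition A :: "real^'d^'d" where
  "A = (\<Sum>s\<in>UNIV. \<Sum>s'\<in>UNIV. (\<mu> s * P s s') *\<^sub>R outer (\<phi> s) (\<phi> s - \<gamma> *\<^sub>R \<phi> s'))"

lemma transition_weight_nonneg: "0 \<le> \<mu> s * P s s'"
  using mu_nonneg P_nonneg by simp

lemma sum_transition_weight_left: "(\<Sum>s\<in>UNIV. \<Sum>s'\<in>UNIV. \<mu> s * P s s' * f s) = (\<Sum>s\<in>UNIV. \<mu> s * f s)"
  by (simp add: sum_distrib_right[symmetric] sum_distrib_left[symmetric] P_sum)

lemma sum_transition_weight_right: "(\<Sum>s\<in>UNIV. \<Sum>s'\<in>UNIV. \<mu> s * P s s' * f s') = (\<Sum>s\<in>UNIV. \<mu> s * f s)"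
  by (subst sum.swap) (simp add: sum_distrib_right[symmetric] mu_stat)

lemma sum_transition_weight_cross_le:
  "(\<Sum>s\<in>UNIV. \<Sum>s'\<in>UNIV. \<mu> s * P s s' * (f s * f s')) \<le> (\<Sum>s\<in>UNIV. \<mu> s * (f s)^2)"
proof -
  have "(\<Sum>s\<in>UNIV. \<Sum>s'\<in>UNIV. \<mu> s * P s s' * (f s * f s'))
      \<le> (\<Sum>s\<in>UNIV. \<Sum>s'\<in>UNIV. \<mu> s * P s s' * (f s)^2 / 2 + \<mu> s * P s s' * (f s')^2 / 2)"
  proof (intro sum_mono)
    fix s s'
    have "\<mu> s * P s s' * (f s * f s') \<le> \<mu> s * P s s' * (((f s)^2 + (f s')^2) / 2)"
      using sum_squares_bound[of "f s" "f s'"] transition_weight_nonneg by (intro mult_left_mono) auto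
    then show "\<mu> s * P s s' * (f s * f s') \<le> \<mu> s * P s s' * (f s)^2 / 2 + \<mu> s * P s s' * (f s')^2 / 2"
      by (simp add: field_simps)
  qed
  also have "\<dots> = (\<Sum>s\<in>UNIV. \<mu> s * (f s)^2)"
    using sum_transition_weight_left[of "\<lambda>s. (f s)^2"] sum_transition_weight_right[of "\<lambda>s. (f s)^2"]
    by (simp add: sum.distrib sum_divide_distrib[symmetric])
  finally show ?thesis .
qed

lemma Sig_symmetric: "transpose Sig = Sig"
  by (simp add: Sig_def transpose_sum transpose_scalar transpose_outer)

lemma quadratic_form_Sig: "z \<bullet> (Sig *v z) = (\<Sum>s\<in>UNIV. \<mu> s * (\<phi> s \<bullet> z)^2)"
  by (simp add: Sig_def matrix_vector_mult_sum_left outer_matrix_vector inner_sum_right power2_eq_square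
      inner_commute mult.assoc flip: scaleR_matrix_vector_assoc)

lemma inner_A:
  "z \<bullet> (A *v y) = (\<Sum>s\<in>UNIV. \<Sum>s'\<in>UNIV. \<mu> s * P s s' * ((\<phi> s \<bullet> z) * ((\<phi> s \<bullet> y) - \<gamma> * (\<phi> s' \<bullet> y))))"
  by (simp add: A_def matrix_vector_mult_sum_left outer_matrix_vector inner_sum_right inner_diff_right
      inner_commute mult.assoc mult.commute mult.left_commute flip: scaleR_matrix_vector_assoc)

lemma quadratic_form_A:
  "y \<bullet> (A *v y) = y \<bullet> (Sig *v y) - \<gamma> * (\<Sum>s\<in>UNIV. \<Sum>s'\<in>UNIV. \<mu> s * P s s' * ((\<phi> s \<bullet> y) * (\<phi> s' \<bullet> y)))"
proof -
  have "y \<bullet> (A *v y) = (\<Sum>s\<in>UNIV. \<Sum>s'\<in>UNIV. \<mu> s * P s s' * (\<phi> s \<bullet> y)^2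
      - \<gamma> * (\<mu> s * P s s' * ((\<phi> s \<bullet> y) * (\<phi> s' \<bullet> y))))"
    unfolding inner_A by (intro sum.cong refl) (simp add: power2_eq_square algebra_simps)
  also have "\<dots> = y \<bullet> (Sig *v y) - \<gamma> * (\<Sum>s\<in>UNIV. \<Sum>s'\<in>UNIV. \<mu> s * P s s' * ((\<phi> s \<bullet> y) * (\<phi> s' \<bullet> y)))"
    by (simp add: sum_subtractf sum_distrib_left sum_transition_weight_left quadratic_form_Sig)
  finally show ?thesis .
qed

lemma quadratic_form_Sig_nonneg: "0 \<le> y \<bullet> (Sig *v y)"
  unfolding quadratic_form_Sig using mu_nonneg by (intro sum_nonneg) simp

lemma quadratic_form_A_ge: "(1 - \<gamma>) * (y \<bullet> (Sig *v y)) \<le> y \<bullet> (A *v y)"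
  using sum_transition_weight_cross_le[of "\<lambda>s. \<phi> s \<bullet> y"] gamma
  unfolding quadratic_form_A quadratic_form_Sig[symmetric] by (simp add: algebra_simps mult_left_mono)

lemma norm_A_sq_le:
  assumes LS: "0 < LS" and up: "\<And>z. z \<bullet> (Sig *v z) \<le> LS * (norm z)^2"
  shows "(norm (A *v y))^2 \<le> LS * (2 * (y \<bullet> (A *v y)) - (1 - \<gamma>^2) * (y \<bullet> (Sig *v y)))"
proof -
  define a where "a s = \<phi> s \<bullet> y" for s
  define z where "z = A *v y"
  define E where "E = (\<Sum>s\<in>UNIV. \<Sum>s'\<in>UNIV. \<mu> s * P s s' * (a s - \<gamma> * a s')^2)"
  have E: "E = 2 * (y \<bullet> (A *v y)) - (1 - \<gamma>^2) * (y \<bullet> (Sig *v y))"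
  proof -
    have "E = (\<Sum>s\<in>UNIV. \<Sum>s'\<in>UNIV. \<mu> s * P s s' * (a s)^2 - 2 * \<gamma> * (\<mu> s * P s s' * (a s * a s'))
        + \<gamma>^2 * (\<mu> s * P s s' * (a s')^2))"
      unfolding E_def by (intro sum.cong refl) (simp add: power2_eq_square algebra_simps)
    also have "\<dots> = (\<Sum>s\<in>UNIV. \<Sum>s'\<in>UNIV. \<mu> s * P s s' * (a s)^2)
        - 2 * \<gamma> * (\<Sum>s\<in>UNIV. \<Sum>s'\<in>UNIV. \<mu> s * P s s' * (a s * a s'))
        + \<gamma>^2 * (\<Sum>s\<in>UNIV. \<Sum>s'\<in>UNIV. \<mu> s * P s s' * (a s')^2)"
      by (simp add: sum.distrib sum_subtractf sum_distrib_left)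
    also have "\<dots> = (1 + \<gamma>^2) * (y \<bullet> (Sig *v y)) - 2 * \<gamma> * (\<Sum>s\<in>UNIV. \<Sum>s'\<in>UNIV. \<mu> s * P s s' * (a s * a s'))"
      unfolding sum_transition_weight_left sum_transition_weight_right
      by (simp add: quadratic_form_Sig a_def algebra_simps)
    finally show ?thesis by (simp add: quadratic_form_A a_def algebra_simps)
  qed
  \<comment> \<open>Young's inequality on each term of \<open>z \<bullet> (A *v y)\<close>, then the upper bound on \<open>Sig\<close> at \<open>z\<close>.\<close>
  have "LS * (norm z)^2 = (\<Sum>s\<in>UNIV. \<Sum>s'\<in>UNIV. \<mu> s * P s s' * (LS * ((\<phi> s \<bullet> z) * (a s - \<gamma> * a s'))))"
    using inner_A[of z y] by (simp add: z_def power2_norm_eq_inner a_def sum_distrib_left algebra_simps)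
  also have "\<dots> \<le> (\<Sum>s\<in>UNIV. \<Sum>s'\<in>UNIV. \<mu> s * P s s' * (\<phi> s \<bullet> z)^2 / 2 + LS^2 / 2 * (\<mu> s * P s s' * (a s - \<gamma> * a s')^2))"
  proof (intro sum_mono)
    fix s s'
    have "LS * ((\<phi> s \<bullet> z) * (a s - \<gamma> * a s')) \<le> ((\<phi> s \<bullet> z)^2 + LS^2 * (a s - \<gamma> * a s')^2) / 2"
      using zero_le_power2[of "(\<phi> s \<bullet> z) - LS * (a s - \<gamma> * a s')"] by (simp add: power2_eq_square algebra_simps)
    from mult_left_mono[OF this transition_weight_nonneg]
    show "\<mu> s * P s s' * (LS * ((\<phi> s \<bullet> z) * (a s - \<gamma> * a s')))
      \<le> \<mu> s * P s s' * (\<phi> s \<bullet> z)^2 / 2 + LS^2 / 2 * (\<mu> s * P s s' * (a s - \<gamma> * a s')^2)"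
      by (simp add: algebra_simps add_divide_distrib)
  qed
  also have "\<dots> = z \<bullet> (Sig *v z) / 2 + LS^2 / 2 * E"
    by (simp add: sum.distrib sum_divide_distrib[symmetric] sum_distrib_left[symmetric] E_def
        sum_transition_weight_left quadratic_form_Sig)
  also have "\<dots> \<le> LS * (norm z)^2 / 2 + LS^2 / 2 * E" using up[of z] by simp
  finally have "LS * (norm z)^2 \<le> LS * (LS * E)" by (simp add: power2_eq_square algebra_simps)
  then show ?thesis using LS by (simp add: z_def E)
qed

lemma step_norm_le_exp:
  assumes LS: "0 < LS" and up: "\<And>z. z \<bullet> (Sig *v z) \<le> LS * (norm z)^2"
    and lo: "\<And>z. L0 * (norm z)^2 \<le> z \<bullet> (Sig *v z)" and L0: "0 \<le> L0"
    and \<eta>: "0 \<le> \<eta>" "\<eta> * LS \<le> 1/2"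
  shows "norm ((mat 1 - \<eta> *\<^sub>R A) *v y) \<le> exp (- (3/4 * (1 - \<gamma>) * L0 * \<eta>)) * norm y"
proof -
  define q where "q = y \<bullet> (A *v y)"
  define s where "s = y \<bullet> (Sig *v y)"
  define X where "X = 2 * q - (1 - \<gamma>^2) * s"
  have AX: "(norm (A *v y))^2 \<le> LS * X" using norm_A_sq_le[OF LS up] by (simp add: X_def q_def s_def)
  then have "0 \<le> X" using LS by (smt (verit) zero_le_power2 mult_pos_neg)
  have "\<eta>^2 * (norm (A *v y))^2 \<le> \<eta> * (\<eta> * LS) * X"
    using mult_left_mono[OF AX, of "\<eta>^2"] by (simp add: power2_eq_square algebra_simps)
  also have "\<dots> \<le> \<eta> * (1/2) * X" using \<eta> \<open>0 \<le> X\<close> by (intro mult_right_mono mult_left_mono) auto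
  also have "\<dots> = \<eta> * q - \<eta> * ((1 - \<gamma>^2) * s) / 2" by (simp add: X_def field_simps)
  finally have quad: "\<eta>^2 * (norm (A *v y))^2 \<le> \<eta> * q - \<eta> * ((1 - \<gamma>^2) * s) / 2" .
  have "(1 - \<gamma>) * s \<le> q" using quadratic_form_A_ge by (simp add: q_def s_def)
  then have q: "\<eta> * ((1 - \<gamma>) * s) \<le> \<eta> * q" using \<eta>(1) by (rule mult_left_mono)
  have "(1 - \<gamma>) * s \<le> (1 - \<gamma>^2) * s"
    using gamma quadratic_form_Sig_nonneg[of y]
    by (intro mult_right_mono) (auto simp: s_def power2_eq_square mult_left_le_one_le)
  then have s: "\<eta> * ((1 - \<gamma>) * s) \<le> \<eta> * ((1 - \<gamma>^2) * s)" using \<eta>(1) by (rule mult_left_mono)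
  have "(1 - \<gamma>) * (L0 * (norm y)^2) \<le> (1 - \<gamma>) * s" using lo[of y] gamma by (simp add: s_def)
  then have L: "\<eta> * ((1 - \<gamma>) * (L0 * (norm y)^2)) \<le> \<eta> * ((1 - \<gamma>) * s)" using \<eta>(1) by (rule mult_left_mono)
  have "(norm (y - \<eta> *\<^sub>R (A *v y)))^2 = (norm y)^2 - 2 * (\<eta> * q) + \<eta>^2 * (norm (A *v y))^2"
    unfolding power2_norm_eq_inner q_def
    by (simp add: inner_diff_left inner_diff_right inner_commute power2_eq_square algebra_simps)
  also have "\<dots> \<le> (norm y)^2 - 3/2 * (\<eta> * ((1 - \<gamma>) * (L0 * (norm y)^2)))"
    using quad q s L by linarith
  also have "\<dots> = (1 - 2 * (3/4 * (1 - \<gamma>) * L0 * \<eta>)) * (norm y)^2" by (simp add: field_simps)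
  finally have "norm (y - \<eta> *\<^sub>R (A *v y)) \<le> exp (- (3/4 * (1 - \<gamma>) * L0 * \<eta>)) * norm y"
    using gamma L0 \<eta> by (intro norm_le_exp_if_norm_sq_le) auto
  then show ?thesis
    by (simp add: matrix_vector_mult_diff_rdistrib flip: scaleR_matrix_vector_assoc)
qed

lemma lambda_min_Sig_le_lambda_max: "lambda_min Sig \<le> lambda_max Sig"
proof -
  obtain v where v: "norm v = 1" "Sig *v v = lambda_min Sig *\<^sub>R v"
    using symmetric_lambda_min(1)[OF Sig_symmetric] by blast
  then have "lambda_min Sig = v \<bullet> (Sig *v v)" by (simp add: norm_eq_1)
  also have "\<dots> \<le> lambda_max Sig" using quadratic_form_le_lambda_max[OF Sig_symmetric, of v] v by simp
  finally show ?thesis .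
qed

lemma norm_step_prod_le_exp_partial_sum:
  assumes \<alpha>: "0 < \<alpha>" and \<eta>0: "0 < \<eta>0" "\<eta>0 \<le> 1 / (2 * lambda_max Sig)"
    and lam0: "0 < lambda_min Sig"
  shows "norm (step_prod (\<lambda>t. \<eta>0 * real t powr (- \<alpha>)) A 0 j *v x)
    \<le> exp (- (3/4 * ((1 - \<gamma>) * lambda_min Sig * \<eta>0) * (\<Sum>k\<in>{1..j}. real k powr (- \<alpha>)))) * norm x"
proof -
  define \<eta> where "\<eta> = (\<lambda>t::nat. \<eta>0 * real t powr (- \<alpha>))"
  define LS where "LS = lambda_max Sig"
  have LS: "0 < LS" using lam0 lambda_min_Sig_le_lambda_max by (simp add: LS_def)
  have \<eta>0LS: "\<eta>0 * LS \<le> 1/2" using \<eta>0 LS by (simp add: LS_def field_simps)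
  have step: "norm ((mat 1 - \<eta> k *\<^sub>R A) *v y) \<le> exp (- (3/4 * (1 - \<gamma>) * lambda_min Sig * \<eta> k)) * norm y"
    if "1 \<le> k" for k y
  proof (rule step_norm_le_exp[OF LS])
    have "real k powr (- \<alpha>) \<le> 1" using that \<alpha> by (simp add: powr_minus inverse_le_1_iff ge_one_powr_ge_zero)
    then have "\<eta> k \<le> \<eta>0" using \<eta>0 by (simp add: \<eta>_def mult_left_le)
    then have "\<eta> k * LS \<le> \<eta>0 * LS" using LS by (intro mult_right_mono) auto
    then show "\<eta> k * LS \<le> 1/2" using \<eta>0LS by linarith
  qed (use lam0 \<eta>0 symmetric_lambda_min(2)[OF Sig_symmetric] quadratic_form_le_lambda_max[OF Sig_symmetric]
      in \<open>auto simp: \<eta>_def LS_def\<close>)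
  have sum: "(\<Sum>k\<in>{Suc 0..j}. 3/4 * (1 - \<gamma>) * lambda_min Sig * \<eta> k)
      = 3/4 * ((1 - \<gamma>) * lambda_min Sig * \<eta>0) * (\<Sum>k\<in>{1..j}. real k powr (- \<alpha>))"
    by (simp add: \<eta>_def sum_distrib_left) (simp add: algebra_simps)
  have "norm (step_prod \<eta> A 0 j *v x) \<le> exp (- (\<Sum>k\<in>{Suc 0..j}. 3/4 * (1 - \<gamma>) * lambda_min Sig * \<eta> k)) * norm x"
    by (rule norm_step_prod_le_exp) (rule step)
  then show ?thesis unfolding sum by (simp only: \<eta>_def)
qed

lemma lambda_min_A_Lambda_bar_A_ge_half:
  fixes \<alpha> \<eta>0 :: real and T :: nat and G :: "real^'d^'d"
  assumes \<alpha>: "0 < \<alpha>" "\<alpha> < 1" and \<eta>0: "0 < \<eta>0" "\<eta>0 \<le> 1 / (2 * lambda_max Sig)"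
    and lam0: "0 < lambda_min Sig" and Gsym: "transpose G = G" and Gpd: "pos_def G"
    and T_large: "4 * (2 / ((1 - \<gamma>) * lambda_min Sig * \<eta>0)) powr (1 / (1 - \<alpha>))
        * (1 - \<alpha>) powr (\<alpha> / (1 - \<alpha>)) * Gamma (1 / (1 - \<alpha>)) * cond_num G \<le> real T"
  shows "lambda_min G / 2 \<le> lambda_min (A ** Lambda_bar (\<lambda>t. \<eta>0 * real t powr (- \<alpha>)) A G T ** transpose A)"
proof -
  define K where "K = (1 - \<gamma>) * lambda_min Sig * \<eta>0"
  define X where "X = 4 * (2 / K) powr (1 / (1 - \<alpha>)) * (1 - \<alpha>) powr (\<alpha> / (1 - \<alpha>)) * Gamma (1 / (1 - \<alpha>))"
  have K: "0 < K" "K \<le> 1/2"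
  proof -
    have "(1 - \<gamma>) * lambda_min Sig \<le> lambda_min Sig" using gamma lam0 by (simp add: mult_left_le_one_le)
    then have "K \<le> lambda_max Sig * \<eta>0"
      unfolding K_def using lambda_min_Sig_le_lambda_max \<eta>0 by (intro mult_right_mono) auto
    then show "K \<le> 1/2" using \<eta>0 lam0 lambda_min_Sig_le_lambda_max by (simp add: field_simps)
    show "0 < K" using gamma lam0 \<eta>0 by (simp add: K_def)
  qed
  have X: "0 < X" using K \<alpha> by (simp add: X_def Gamma_real_pos)
  have "X * 1 \<le> X * cond_num G"
    using X cond_num_ge_1[OF pos_def_invertible[OF Gsym Gpd]] by (intro mult_left_mono) auto
  then have T: "X \<le> real T" using T_large by (simp add: X_def K_def)
  have "3/4 * real T * (norm x)^2 \<le> (\<Sum>t\<in>{1..T}. x \<bullet> (A *v (Qmat (\<lambda>t. \<eta>0 * real t powr (- \<alpha>)) A T t *v x)))"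
    for x
  proof -
    have "(\<Sum>j\<in>{1..T}. exp (- (3/4 * K * (\<Sum>k\<in>{1..j}. real k powr (- \<alpha>))))) \<le> real T / 4"
      using sum_exp_neg_partial_sums_le_quarter[OF \<alpha> K] T by (simp add: X_def)
    then have "3/4 * real T * (norm x)^2
        \<le> (real T - (\<Sum>j\<in>{1..T}. exp (- (3/4 * K * (\<Sum>k\<in>{1..j}. real k powr (- \<alpha>)))))) * (norm x)^2"
      by (intro mult_right_mono) auto
    also have "\<dots> \<le> (\<Sum>t\<in>{1..T}. x \<bullet> (A *v (Qmat (\<lambda>t. \<eta>0 * real t powr (- \<alpha>)) A T t *v x)))"
      unfolding K_def by (rule sum_quadratic_form_A_Qmat_ge[OF norm_step_prod_le_exp_partial_sum[OF \<alpha>(1) \<eta>0 lam0]])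
    finally show ?thesis .
  qed
  from lambda_min_Lambda_bar_ge[OF Gsym _ _ _ this]
  have "(3/4)^2 * lambda_min G \<le> lambda_min (A ** Lambda_bar (\<lambda>t. \<eta>0 * real t powr (- \<alpha>)) A G T ** transpose A)"
    using pos_def_lambda_min_pos[OF Gsym Gpd] X T by simp
  then show ?thesis using pos_def_lambda_min_pos[OF Gsym Gpd] by (simp add: power2_eq_square)
qed

end

theorem mainTheorem17:
  fixes \<gamma> :: real
    and P :: "'s::finite \<Rightarrow> 's \<Rightarrow> real"
    and \<mu> :: "'s \<Rightarrow> real"
    and r :: "'s \<Rightarrow> real"
    and \<phi> :: "'s \<Rightarrow> real^'d::finite"
    and D :: "('s \<times> 's \<times> real) pmf"
    and \<alpha> \<eta>0 :: real
    and T :: nat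
  assumes gamma: "0 \<le> \<gamma>" "\<gamma> < 1"
    and P_nonneg: "\<And>s s'. 0 \<le> P s s'"
    and P_sum: "\<And>s. (\<Sum>s'\<in>UNIV. P s s') = 1"
    and mu_nonneg: "\<And>s. 0 \<le> \<mu> s"
    and mu_sum: "(\<Sum>s\<in>UNIV. \<mu> s) = 1"
    and mu_stat: "\<And>s'. (\<Sum>s\<in>UNIV. \<mu> s * P s s') = \<mu> s'"
    and r_range: "\<And>s. 0 \<le> r s \<and> r s \<le> 1"
    and phi_bd: "\<And>s. norm (\<phi> s) \<le> 1"
    and D_marg: "\<And>s s'. measure_pmf.prob D {(x, y, z). x = s \<and> y = s'} = \<mu> s * P s s'"
    and D_rew: "\<And>x y z. (x, y, z) \<in> set_pmf D \<Longrightarrow> 0 \<le> z \<and> z \<le> 1"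
    and D_condexp: "\<And>s. measure_pmf.expectation D (\<lambda>(x, y, z). if x = s then z else 0) = \<mu> s * r s"
    and lam0_pos: "lambda_min (\<Sum>s\<in>UNIV. \<mu> s *\<^sub>R outer (\<phi> s) (\<phi> s)) > 0"
    and alpha: "1/2 < \<alpha>" "\<alpha> < 1"
    and eta0: "0 < \<eta>0" "\<eta>0 \<le> 1 / (2 * lambda_max (\<Sum>s\<in>UNIV. \<mu> s *\<^sub>R outer (\<phi> s) (\<phi> s)))"
    and Gamma_pd: "pos_def
      (let A = (\<Sum>s\<in>UNIV. \<Sum>s'\<in>UNIV. (\<mu> s * P s s') *\<^sub>R outer (\<phi> s) (\<phi> s - \<gamma> *\<^sub>R \<phi> s'));
           b = (\<Sum>s\<in>UNIV. (\<mu> s * r s) *\<^sub>R \<phi> s);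
           \<theta> = matrix_inv A *v b
       in measure_pmf.expectation D (\<lambda>(x, y, z).
            let e = outer (\<phi> x) (\<phi> x - \<gamma> *\<^sub>R \<phi> y) *v \<theta> - z *\<^sub>R \<phi> x in outer e e))"
    and T_large: "real T \<ge> 4 * (2 / ((1 - \<gamma>) *
          lambda_min (\<Sum>s\<in>UNIV. \<mu> s *\<^sub>R outer (\<phi> s) (\<phi> s)) * \<eta>0)) powr (1 / (1 - \<alpha>))
        * (1 - \<alpha>) powr (\<alpha> / (1 - \<alpha>)) * Gamma (1 / (1 - \<alpha>))
        * cond_num
      (let A = (\<Sum>s\<in>UNIV. \<Sum>s'\<in>UNIV. (\<mu> s * P s s') *\<^sub>R outer (\<phi> s) (\<phi> s - \<gamma> *\<^sub>R \<phi> s'));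
           b = (\<Sum>s\<in>UNIV. (\<mu> s * r s) *\<^sub>R \<phi> s);
           \<theta> = matrix_inv A *v b
       in measure_pmf.expectation D (\<lambda>(x, y, z).
            let e = outer (\<phi> x) (\<phi> x - \<gamma> *\<^sub>R \<phi> y) *v \<theta> - z *\<^sub>R \<phi> x in outer e e))"
  shows "let A = (\<Sum>s\<in>UNIV. \<Sum>s'\<in>UNIV. (\<mu> s * P s s') *\<^sub>R outer (\<phi> s) (\<phi> s - \<gamma> *\<^sub>R \<phi> s'));
             b = (\<Sum>s\<in>UNIV. (\<mu> s * r s) *\<^sub>R \<phi> s);
             \<theta> = matrix_inv A *v b;
             G = measure_pmf.expectation D (\<lambda>(x, y, z).
                   let e = outer (\<phi> x) (\<phi> x - \<gamma> *\<^sub>R \<phi> y) *v \<theta> - z *\<^sub>R \<phi> x in outer e e);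
             \<eta> = (\<lambda>t::nat. \<eta>0 * real t powr (- \<alpha>))
         in lambda_min (A ** Lambda_bar \<eta> A G T ** transpose A) \<ge> lambda_min G / 2
            \<and> lambda_min G / 2 = 1 / (2 * mat_norm (matrix_inv G))"
proof -
  interpret td_chain \<gamma> P \<mu> \<phi>
    by unfold_locales (fact gamma P_nonneg P_sum mu_nonneg mu_stat)+
  define G where "G = measure_pmf.expectation D (\<lambda>(x, y, z).
    let e = outer (\<phi> x) (\<phi> x - \<gamma> *\<^sub>R \<phi> y) *v (matrix_inv A *v (\<Sum>s\<in>UNIV. (\<mu> s * r s) *\<^sub>R \<phi> s)) - z *\<^sub>R \<phi> x
    in outer e e)"
  have Gsym: "transpose G = G"
    unfolding G_def by (rule transpose_expectation_symmetric) (simp add: Let_def transpose_outer split: prod.splits)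
  have Gpd: "pos_def G" using Gamma_pd by (simp add: G_def A_def)
  have "lambda_min G / 2 \<le> lambda_min (A ** Lambda_bar (\<lambda>t. \<eta>0 * real t powr (- \<alpha>)) A G T ** transpose A)"
    using alpha eta0 lam0_pos T_large
    by (intro lambda_min_A_Lambda_bar_A_ge_half Gsym Gpd) (simp_all add: Sig_def G_def A_def)
  moreover have "lambda_min G / 2 = 1 / (2 * mat_norm (matrix_inv G))"
    using pos_def_mat_norm_matrix_inv[OF Gsym Gpd] by simp
  ultimately show ?thesis by (simp add: G_def A_def)
qed

end
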